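(* Suppose $\Delta$ is full dimensional and convex, and let $\epsilon>0$. For any $x\in\mathcal X$, $$\max_{\phi\in\mathcal P(\Delta)}\Big\{\mathbb E_{\tilde\delta\sim\phi}[g(x,\tilde\delta)]-\kappa(\epsilon)D(\phi,\phi_u)\Big\}\ge G(x)-\epsilon,$$ and $$G(x)\ge\mathbb E_{\tilde\delta\sim\phi_{\kappa(\epsilon),x}}[g(x,\tilde\delta)]\ge G(x)-\epsilon.$$
   Context: $\mathcal X\subset\mathbb R^n$ compact convex; $\Delta\subset\mathbb R^d$ compact; $g:\mathcal X\times\Delta\to\mathbb R$ with $\delta\mapsto g(x,\delta)$ $L_{g,\Delta}$-Lipschitz (Euclidean norm) for each $x$; $G(x):=\max_{\delta\in\Delta}g(x,\delta)$. $\mathcal P(\Delta)$ is the set of probability distributions on $\Delta$; $\phi_u$ is the uniform density on $\Delta$, $\phi_u\equiv p_u:=(\int_\Delta d\delta)^{-1}$; $D(\phi,\varphi):=\int_\Delta\log(\phi(\delta)/\varphi(\delta))\phi(d\delta)$ is the Kullback–Leibler divergence. For $\kappa\in(0,1]$, $\phi_{\kappa,x}(\delta):=\exp(g(x,\delta)/\kappa)/\int_\Delta\exp(g(x,\delta')/\kappa)d\delta'$. $R_\Delta$ is the radius of the largest Euclidean ball $B_{R_\Delta}(\delta_0)\subseteq\Delta$; $r:=\mathrm{vol}(B_{R_\Delta}(\delta_0))/\mathrm{vol}(\Delta)$; $D_\Delta:=\max_{\delta,\delta'\in\Delta}\|\delta-\delta'\|$; $C:=L_{g,\Delta}(R_\Delta+D_\Delta)-\log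 r$; $\kappa(\epsilon):=\min\{\frac{\epsilon}{2C},(\frac{\epsilon}{2d})^2,1\}$. *)

theory Defs
  imports "HOL-Analysis.Analysis"
begin

definition inradius :: "'b::euclidean_space set \<Rightarrow> real" where
  "inradius D = Sup {\<rho>. 0 \<le> \<rho> \<and> (\<exists>c. cball c \<rho> \<subseteq> D)}"

definition ball_ratio :: "'b::euclidean_space set \<Rightarrow> real" where
  "ball_ratio D = measure lborel (cball (0::'b) (inradius D)) / measure lborel D"

definition Cconst :: "real \<Rightarrow> 'b::euclidean_space set \<Rightarrow> real" where
  "Cconst L D = L * (inradius D + diameter D) - ln (ball_ratio D)"

text \<open>kappa(eps) = min {eps/(2C), (eps/(2d))^2, 1}, with eps/(2C) read as +infinity if C = 0.\<close>
definition kappa :: "real \<Rightarrow> 'b::euclidean_space set \<Rightarrow> real \<Rightarrow> real" where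
  "kappa L D \<epsilon> =
     (if Cconst L D = 0 then min ((\<epsilon> / (2 * real DIM('b)))\<^sup>2) 1
      else min (\<epsilon> / (2 * Cconst L D)) (min ((\<epsilon> / (2 * real DIM('b)))\<^sup>2) 1))"

definition Gmax :: "('a \<Rightarrow> 'b \<Rightarrow> real) \<Rightarrow> 'b set \<Rightarrow> 'a \<Rightarrow> real" where
  "Gmax g D x = (SUP \<delta>\<in>D. g x \<delta>)"

definition unif_dens :: "'b::euclidean_space set \<Rightarrow> real" where
  "unif_dens D = 1 / measure lborel D"

definition is_density :: "'b::euclidean_space set \<Rightarrow> ('b \<Rightarrow> real) \<Rightarrow> bool" where
  "is_density D \<phi> \<longleftrightarrow> (\<forall>\<delta>\<in>D. 0 \<le> \<phi> \<delta>) \<and> set_integrable lborel D \<phi>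
      \<and> (LINT \<delta>:D|lborel. \<phi> \<delta>) = 1"

definition KL_unif :: "'b::euclidean_space set \<Rightarrow> ('b \<Rightarrow> real) \<Rightarrow> real" where
  "KL_unif D \<phi> = (LINT \<delta>:D|lborel. \<phi> \<delta> * ln (\<phi> \<delta> / unif_dens D))"

definition expect :: "'b::euclidean_space set \<Rightarrow> ('b \<Rightarrow> real) \<Rightarrow> ('b \<Rightarrow> real) \<Rightarrow> real" where
  "expect D \<phi> h = (LINT \<delta>:D|lborel. h \<delta> * \<phi> \<delta>)"

definition gibbs :: "('a \<Rightarrow> 'b::euclidean_space \<Rightarrow> real) \<Rightarrow> 'b set \<Rightarrow> real \<Rightarrow> 'a \<Rightarrow> 'b \<Rightarrow> real" where
  "gibbs g D \<kappa> x \<delta> = exp (g x \<delta> / \<kappa>) / (LINT \<delta>':D|lborel. exp (g x \<delta>' / \<kappa>))"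

end

theory Submission
  imports Defs
begin

text \<open>The Gibbs density \<phi> = exp (g/\<kappa>) / Z realizes the entropy-regularized objective exactly:
  E_\<phi> g - \<kappa> D(\<phi>, \<phi>_u) = \<kappa> ln (Z / vol \<Delta>). To bound the partition function Z from below,
  shrink an inscribed ball of radius \<rho> by the factor \<kappa> towards a maximizer \<delta>* of g. By convexity
  the shrunk ball stays in \<Delta>, and it lies within distance \<kappa> D_\<Delta> of \<delta>*, where g \<ge> G - L \<kappa> D_\<Delta>.
  Hence Z \<ge> vol(B_\<rho>) \<kappa>^d exp (G/\<kappa> - L D_\<Delta>), which after taking logarithms (and \<rho> \<rightarrow> R_\<Delta>) reads
  \<kappa> ln (Z / vol \<Delta>) \<ge> G - \<kappa> C + d \<kappa> ln \<kappa>. The choice of \<kappa>(\<epsilon>) makes \<kappa> C \<le> \<epsilon>/2 and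
  -d \<kappa> ln \<kappa> \<le> d sqrt \<kappa> \<le> \<epsilon>/2. The bound on the expectation follows because D(\<phi>, \<phi>_u) \<ge> 0.\<close>

lemma neg_mult_ln_le_sqrt:
  fixes k :: real
  assumes "0 < k" "k \<le> 1"
  shows "- (k * ln k) \<le> sqrt k"
proof -
  define u where "u = sqrt (sqrt k)"
  have u0: "0 < u" using assms by (simp add: u_def)
  have sqrt_k: "sqrt k = u\<^sup>2"
    using assms by (simp add: u_def)
  have k: "k = (u\<^sup>2)\<^sup>2"
    unfolding sqrt_k[symmetric] using assms by simp
  have "- (k * ln k) = 4 * u ^ 4 * (- ln u)"
    using u0 by (simp add: k ln_realpow flip: power_mult)
  also have "\<dots> \<le> 4 * u ^ 4 * (1 / u - 1)"
    using ln_le_minus_one[of "1 / u"] u0 by (intro mult_left_mono) (simp_all add: ln_div)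
  also have "\<dots> = u\<^sup>2 - u\<^sup>2 * (2 * u - 1)\<^sup>2"
    using u0 by (simp add: field_simps power2_eq_square power4_eq_xxxx)
  also have "\<dots> \<le> sqrt k"
    by (simp add: sqrt_k)
  finally show ?thesis .
qed

lemma diff_le_mult_ln_div:
  fixes a b :: real
  assumes "0 \<le> a" "0 < b"
  shows "a - b \<le> a * ln (a / b)"
proof (cases "a = 0")
  case False
  then have "a * (1 - b / a) \<le> a * ln (a / b)"
    using ln_le_minus_one[of "b / a"] assms by (intro mult_left_mono) (simp_all add: ln_div)
  moreover have "a * (1 - b / a) = a - b"
    using False by (simp add: field_simps)
  ultimately show ?thesis by simp
qed (use assms in simp)

lemma set_integrable_continuous_on_compact:
  fixes f :: "'b::euclidean_space \<Rightarrow> real"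
  assumes "compact D" "continuous_on D f"
  shows "set_integrable lborel D f"
  using borel_integrable_compact[OF assms] by (simp add: set_integrable_def)

lemma measure_mult_le_set_integral:
  fixes f :: "'b::euclidean_space \<Rightarrow> real"
  assumes "S \<in> fmeasurable lborel" "set_integrable lborel S f" "\<And>y. y \<in> S \<Longrightarrow> c \<le> f y"
  shows "measure lborel S * c \<le> (LINT y:S|lborel. f y)"
proof -
  have "set_integrable lborel S (\<lambda>_. c)"
    using assms(1) by (simp add: set_integrable_def fmeasurable_def integrable_indicator_iff)
  then have "(LINT y:S|lborel. c) \<le> (LINT y:S|lborel. f y)"
    using assms by (intro set_integral_mono) auto
  moreover have "(LINT y:S|lborel. c) = measure lborel S * c"
    using assms(1) by (subst set_integral_const) (auto simp: fmeasurable_def)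
  ultimately show ?thesis by simp
qed

lemma set_integral_mono_set_nonneg:
  fixes f :: "'b::euclidean_space \<Rightarrow> real"
  assumes "set_integrable lborel D f" "S \<in> sets lborel" "S \<subseteq> D" "\<And>y. y \<in> D \<Longrightarrow> 0 \<le> f y"
  shows "(LINT y:S|lborel. f y) \<le> (LINT y:D|lborel. f y)"
proof -
  have restrict: "(\<lambda>y. indicator D y * (indicator S y * f y)) = (\<lambda>y. indicator S y * f y)"
    using assms(3) by (intro ext) (auto split: split_indicator)
  have "set_integrable lborel S f"
    using assms(1-3) by (rule set_integrable_subset)
  then have "(LINT y:D|lborel. indicator S y * f y) \<le> (LINT y:D|lborel. f y)"
    using assms by (intro set_integral_mono) (auto simp: set_integrable_def restrict split: split_indicator)
  moreover have "(LINT y:D|lborel. indicator S y * f y) = (LINT y:S|lborel. f y)"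
    by (simp add: set_lebesgue_integral_def restrict)
  ultimately show ?thesis by simp
qed

lemma cball_radius_le_inradius:
  fixes D :: "'b::euclidean_space set"
  assumes "bounded D" "0 \<le> \<rho>" "cball c \<rho> \<subseteq> D"
  shows "\<rho> \<le> inradius D"
  unfolding inradius_def
proof (rule cSup_upper)
  show "bdd_above {\<rho>. 0 \<le> \<rho> \<and> (\<exists>c. cball c \<rho> \<subseteq> D)}"
  proof (rule bdd_aboveI)
    fix r assume "r \<in> {\<rho>. 0 \<le> \<rho> \<and> (\<exists>c. cball c \<rho> \<subseteq> D)}"
    then obtain c' where "0 \<le> r" "cball c' r \<subseteq> D" by blast
    then show "r \<le> diameter D"
      using diameter_subset[of "cball c' r" D] assms(1) diameter_ge_0[OF assms(1)] by auto
  qed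
qed (use assms in blast)

lemma inradius_pos:
  fixes D :: "'b::euclidean_space set"
  assumes "bounded D" "interior D \<noteq> {}"
  shows "0 < inradius D"
proof -
  obtain c e where "0 < e" "ball c e \<subseteq> D"
    using assms(2) by (meson all_not_in_conv mem_interior)
  moreover have "cball c (e / 2) \<subseteq> ball c e"
    using \<open>0 < e\<close> by (simp add: cball_subset_ball_iff)
  ultimately have "cball c (e / 2) \<subseteq> D" by blast
  then have "e / 2 \<le> inradius D"
    using \<open>0 < e\<close> by (intro cball_radius_le_inradius[OF assms(1)]) auto
  with \<open>0 < e\<close> show ?thesis by linarith
qed

text \<open>The inradius need not be attained, so bounds on inscribed balls reach it through a
  monotone function of the radius.\<close>
lemma inradius_power_le:
  fixes D :: "'b::euclidean_space set"
  assumes "D \<noteq> {}" "0 < n" "\<And>c \<rho>. 0 \<le> \<rho> \<Longrightarrow> cball c \<rho> \<subseteq> D \<Longrightarrow> \<rho> ^ n \<le> B"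
  shows "inradius D ^ n \<le> B"
proof -
  obtain c where "c \<in> D" using assms(1) by blast
  then have B0: "0 \<le> B" using assms(3)[of 0 c] assms(2) by (simp add: zero_power)
  have radius_le: "\<rho> \<le> root n B" if "0 \<le> \<rho>" "cball c' \<rho> \<subseteq> D" for \<rho> c'
  proof -
    have "\<rho> ^ n \<le> root n B ^ n"
      using assms(2,3) B0 that by simp
    then show ?thesis
      using power_mono_iff[of \<rho> "root n B" n] assms(2) B0 that(1) by simp
  qed
  define Rs where "Rs = {\<rho>. 0 \<le> \<rho> \<and> (\<exists>c. cball c \<rho> \<subseteq> D)}"
  have "0 \<in> Rs"
    using \<open>c \<in> D\<close> by (auto simp: Rs_def intro!: exI[of _ c])
  moreover have bound: "\<And>\<rho>. \<rho> \<in> Rs \<Longrightarrow> \<rho> \<le> root n B"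
    using radius_le by (auto simp: Rs_def)
  have "0 \<le> Sup Rs"
    using \<open>0 \<in> Rs\<close> bdd_aboveI[OF bound] by (rule cSup_upper)
  moreover have "Sup Rs \<le> root n B"
    using \<open>0 \<in> Rs\<close> bound by (intro cSup_least) auto
  ultimately have "0 \<le> inradius D" "inradius D \<le> root n B"
    by (simp_all add: inradius_def Rs_def)
  then show ?thesis
    using assms(2) B0 by (metis power_mono real_root_pow_pos2)
qed

lemma shrunk_cball_subset:
  fixes D :: "'b::euclidean_space set"
  assumes "convex D" "bounded D" "a \<in> D" "cball c \<rho> \<subseteq> D" "0 < k" "k \<le> 1"
  shows "cball (a + k *\<^sub>R (c - a)) (k * \<rho>) \<subseteq> D \<inter> cball a (k * diameter D)"
proof
  fix y assume y: "y \<in> cball (a + k *\<^sub>R (c - a)) (k * \<rho>)"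
  define z where "z = c + (1 / k) *\<^sub>R (y - (a + k *\<^sub>R (c - a)))"
  have y_eq: "y = (1 - k) *\<^sub>R a + k *\<^sub>R z"
    using assms(5) by (simp add: z_def algebra_simps)
  have "dist c z = norm (y - (a + k *\<^sub>R (c - a))) / k"
    using assms(5) by (simp add: z_def dist_norm)
  also have "\<dots> \<le> \<rho>"
    using y assms(5) by (simp add: dist_norm norm_minus_commute pos_divide_le_eq mult.commute)
  finally have "z \<in> D" using assms(4) by auto
  then have "y \<in> D"
    unfolding y_eq using assms by (intro convexD) auto
  moreover have "dist a y = k * dist a z"
    using assms(5) by (simp add: y_eq dist_norm algebra_simps flip: scaleR_diff_right)
  moreover have "dist a z \<le> diameter D"
    using assms(2,3) \<open>z \<in> D\<close> by (rule diameter_bounded_bound)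
  ultimately show "y \<in> D \<inter> cball a (k * diameter D)"
    using assms(5) by simp
qed

definition partition_fun :: "('b::euclidean_space \<Rightarrow> real) \<Rightarrow> 'b set \<Rightarrow> real \<Rightarrow> real" where
  "partition_fun h D k = (LINT \<delta>:D|lborel. exp (h \<delta> / k))"

lemma gibbs_eq: "gibbs g D k x = (\<lambda>\<delta>. exp (g x \<delta> / k) / partition_fun (g x) D k)"
  by (simp add: gibbs_def partition_fun_def fun_eq_iff)

lemma partition_fun_ge_shrunk_ball:
  fixes D :: "'b::euclidean_space set" and h :: "'b \<Rightarrow> real"
  assumes "compact D" "convex D" "L-lipschitz_on D h" "a \<in> D" "0 \<le> \<rho>" "cball c \<rho> \<subseteq> D"
    and "0 < k" "k \<le> 1"
  shows "unit_ball_vol DIM('b) * (k * \<rho>) ^ DIM('b) * exp (h a / k - L * diameter D)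
           \<le> partition_fun h D k"
proof -
  define S where "S = cball (a + k *\<^sub>R (c - a)) (k * \<rho>)"
  have S: "S \<subseteq> D \<inter> cball a (k * diameter D)"
    unfolding S_def using assms compact_imp_bounded by (intro shrunk_cball_subset) auto
  have near_max: "h a / k - L * diameter D \<le> h y / k" if "y \<in> S" for y
  proof -
    have "h a - h y \<le> L * dist a y"
      using lipschitz_onD[OF assms(3,4)] S that by (force simp: dist_real_def)
    also have "\<dots> \<le> L * (k * diameter D)"
      using S that lipschitz_on_nonneg[OF assms(3)] by (intro mult_left_mono) auto
    finally have "(h a - L * (k * diameter D)) / k \<le> h y / k"
      using assms(7) by (intro divide_right_mono) auto
    with assms(7) show ?thesis
      by (simp add: diff_divide_distrib)
  qed
  have cont: "continuous_on D (\<lambda>\<delta>. exp (h \<delta> / k))"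
    using lipschitz_on_continuous_on[OF assms(3)] assms(7) by (intro continuous_intros) auto
  have "measure lborel S * exp (h a / k - L * diameter D) \<le> (LINT \<delta>:S|lborel. exp (h \<delta> / k))"
    using S near_max unfolding S_def
    by (intro measure_mult_le_set_integral set_integrable_continuous_on_compact
        continuous_on_subset[OF cont] fmeasurable_compact) auto
  also have "\<dots> \<le> partition_fun h D k"
    unfolding partition_fun_def using S
    by (intro set_integral_mono_set_nonneg set_integrable_continuous_on_compact[OF assms(1) cont])
      (auto simp: S_def)
  finally show ?thesis
    using assms(5,7) by (simp add: S_def content_cball)
qed

lemma inradius_ball_volume_le_measure:
  fixes D :: "'b::euclidean_space set"
  assumes "compact D" "interior D \<noteq> {}"
  shows "unit_ball_vol DIM('b) * inradius D ^ DIM('b) \<le> measure lborel D"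
proof -
  have "inradius D ^ DIM('b) \<le> measure lborel D / unit_ball_vol DIM('b)"
  proof (rule inradius_power_le)
    fix c and \<rho> :: real assume "0 \<le> \<rho>" "cball c \<rho> \<subseteq> D"
    then have "measure lborel (cball c \<rho>) \<le> measure lborel D"
      using assms(1) by (intro measure_mono_fmeasurable fmeasurable_compact) auto
    with \<open>0 \<le> \<rho>\<close> show "\<rho> ^ DIM('b) \<le> measure lborel D / unit_ball_vol DIM('b)"
      by (simp add: content_cball pos_le_divide_eq mult.commute)
  qed (use assms interior_subset in auto)
  then show ?thesis
    by (simp add: pos_le_divide_eq mult.commute)
qed

lemma measure_pos_of_interior_nonempty:
  fixes D :: "'b::euclidean_space set"
  assumes "compact D" "interior D \<noteq> {}"
  shows "0 < measure lborel D"
proof -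
  have "0 < unit_ball_vol DIM('b) * inradius D ^ DIM('b)"
    using inradius_pos[OF compact_imp_bounded[OF assms(1)] assms(2)] assms(1) by simp
  with inradius_ball_volume_le_measure[OF assms] show ?thesis by linarith
qed

lemma ball_ratio_eq:
  fixes D :: "'b::euclidean_space set"
  assumes "compact D" "interior D \<noteq> {}"
  shows "ball_ratio D = unit_ball_vol DIM('b) * inradius D ^ DIM('b) / measure lborel D"
  using inradius_pos[OF compact_imp_bounded[OF assms(1)] assms(2)] assms(1)
  by (simp add: ball_ratio_def content_cball)

lemma ball_ratio_pos:
  fixes D :: "'b::euclidean_space set"
  assumes "compact D" "interior D \<noteq> {}"
  shows "0 < ball_ratio D"
  using inradius_pos[OF compact_imp_bounded[OF assms(1)] assms(2)]
    measure_pos_of_interior_nonempty[OF assms]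
  by (simp add: ball_ratio_eq[OF assms])

lemma ball_ratio_le_1:
  fixes D :: "'b::euclidean_space set"
  assumes "compact D" "interior D \<noteq> {}"
  shows "ball_ratio D \<le> 1"
  using inradius_ball_volume_le_measure[OF assms] measure_pos_of_interior_nonempty[OF assms]
  by (simp add: ball_ratio_eq[OF assms])

lemma Cconst_nonneg:
  fixes D :: "'b::euclidean_space set"
  assumes "compact D" "interior D \<noteq> {}" "0 \<le> L"
  shows "0 \<le> Cconst L D"
proof -
  have "0 \<le> L * (inradius D + diameter D)"
    using assms inradius_pos[OF compact_imp_bounded[OF assms(1)] assms(2)]
      diameter_ge_0[OF compact_imp_bounded[OF assms(1)]]
    by simp
  moreover have "ln (ball_ratio D) \<le> 0"
    using ball_ratio_pos[OF assms(1,2)] ball_ratio_le_1[OF assms(1,2)] by simp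
  ultimately show ?thesis
    unfolding Cconst_def by linarith
qed

lemma kappa_pos:
  assumes "0 \<le> Cconst L D" "0 < \<epsilon>"
  shows "0 < kappa L D \<epsilon>"
  using assms by (auto simp: kappa_def)

lemma kappa_le_1: "kappa L D \<epsilon> \<le> 1"
  by (auto simp: kappa_def min_le_iff_disj)

lemma kappa_error_le:
  fixes D :: "'b::euclidean_space set"
  assumes "0 \<le> Cconst L D" "0 < \<epsilon>"
  shows "kappa L D \<epsilon> * Cconst L D - DIM('b) * (kappa L D \<epsilon> * ln (kappa L D \<epsilon>)) \<le> \<epsilon>"
proof -
  define k where "k = kappa L D \<epsilon>"
  define d where "d = real DIM('b)"
  have k0: "0 < k" and k1: "k \<le> 1"
    using kappa_pos[OF assms] kappa_le_1 by (simp_all add: k_def)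
  have d1: "1 \<le> d" by (simp add: d_def)
  have "k * Cconst L D \<le> \<epsilon> / 2"
  proof (cases "Cconst L D = 0")
    case False
    then have "k \<le> \<epsilon> / (2 * Cconst L D)"
      by (simp add: k_def kappa_def)
    with False assms(1) show ?thesis
      by (simp add: pos_le_divide_eq mult.commute)
  qed (use assms in simp)
  moreover have "d * (- (k * ln k)) \<le> \<epsilon> / 2"
  proof -
    have "k \<le> (\<epsilon> / (2 * d))\<^sup>2"
      by (auto simp: k_def kappa_def d_def)
    then have "sqrt k \<le> \<epsilon> / (2 * d)"
      using assms(2) d1 real_sqrt_le_mono by fastforce
    moreover have "- (k * ln k) \<le> sqrt k"
      using k0 k1 by (rule neg_mult_ln_le_sqrt)
    ultimately have "- (k * ln k) \<le> \<epsilon> / (2 * d)" by linarith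
    with d1 show ?thesis
      by (simp add: pos_le_divide_eq mult.commute mult.left_commute)
  qed
  ultimately show ?thesis
    unfolding k_def[symmetric] d_def[symmetric] by linarith
qed

lemma log_partition_fun_lower_bound:
  fixes D :: "'b::euclidean_space set" and h :: "'b \<Rightarrow> real"
  assumes "compact D" "convex D" "interior D \<noteq> {}" "L-lipschitz_on D h" "0 < k" "k \<le> 1"
  shows "(SUP \<delta>\<in>D. h \<delta>) - k * Cconst L D + DIM('b) * (k * ln k)
           \<le> k * ln (partition_fun h D k / measure lborel D)"
proof -
  have "D \<noteq> {}" using assms(3) interior_subset by blast
  obtain a where a: "a \<in> D" "\<And>y. y \<in> D \<Longrightarrow> h y \<le> h a"
    using continuous_attains_sup[OF assms(1) \<open>D \<noteq> {}\<close> lipschitz_on_continuous_on[OF assms(4)]]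
    by blast
  then have sup: "(SUP \<delta>\<in>D. h \<delta>) = h a"
    by (intro cSup_eq_maximum) auto
  define Z where "Z = partition_fun h D k"
  define V where "V = measure lborel D"
  define m where "m = k ^ DIM('b) * exp (h a / k - L * diameter D)"
  have V0: "0 < V" and m0: "0 < m"
    using measure_pos_of_interior_nonempty[OF assms(1,3)] assms(5) by (simp_all add: V_def m_def)
  have "inradius D ^ DIM('b) \<le> Z / (unit_ball_vol DIM('b) * m)"
  proof (rule inradius_power_le)
    fix c and \<rho> :: real assume "0 \<le> \<rho>" "cball c \<rho> \<subseteq> D"
    then have "unit_ball_vol DIM('b) * m * \<rho> ^ DIM('b) \<le> Z"
      using partition_fun_ge_shrunk_ball[OF assms(1,2,4) a(1) _ _ assms(5,6)]
      by (simp add: Z_def m_def power_mult_distrib mult_ac)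
    with m0 show "\<rho> ^ DIM('b) \<le> Z / (unit_ball_vol DIM('b) * m)"
      by (simp add: pos_le_divide_eq mult.commute)
  qed (use \<open>D \<noteq> {}\<close> in auto)
  then have "ball_ratio D * m \<le> Z / V"
    using m0 V0 by (simp add: ball_ratio_eq[OF assms(1,3)] V_def field_simps)
  then have "ln (ball_ratio D * m) \<le> ln (Z / V)"
    using ball_ratio_pos[OF assms(1,3)] m0 by (intro ln_mono) auto
  moreover have "ln (ball_ratio D * m) = ln (ball_ratio D) + DIM('b) * ln k + (h a / k - L * diameter D)"
    using ball_ratio_pos[OF assms(1,3)] assms(5) by (simp add: m_def ln_mult ln_realpow)
  moreover have "0 \<le> L * inradius D"
    using lipschitz_on_nonneg[OF assms(4)] inradius_pos[OF compact_imp_bounded[OF assms(1)] assms(3)]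
    by simp
  ultimately have "h a / k - Cconst L D + DIM('b) * ln k \<le> ln (Z / V)"
    by (simp add: Cconst_def algebra_simps)
  then have "k * (h a / k - Cconst L D + DIM('b) * ln k) \<le> k * ln (Z / V)"
    using assms(5) by (intro mult_left_mono) auto
  with assms(5) show ?thesis
    by (simp add: sup Z_def V_def algebra_simps)
qed

lemma KL_unif_nonneg:
  fixes D :: "'b::euclidean_space set"
  assumes "D \<in> fmeasurable lborel" "0 < measure lborel D" "is_density D \<phi>"
    and "set_integrable lborel D (\<lambda>\<delta>. \<phi> \<delta> * ln (\<phi> \<delta> / unif_dens D))"
  shows "0 \<le> KL_unif D \<phi>"
proof -
  have p0: "0 < unif_dens D"
    using assms(2) by (simp add: unif_dens_def)
  have p_int: "set_integrable lborel D (\<lambda>_. unif_dens D)"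
    using assms(1) by (simp add: set_integrable_def fmeasurable_def integrable_indicator_iff)
  have "(LINT \<delta>:D|lborel. \<phi> \<delta> - unif_dens D) \<le> KL_unif D \<phi>"
    unfolding KL_unif_def using assms(3,4) p_int diff_le_mult_ln_div[OF _ p0]
    by (intro set_integral_mono) (auto simp: is_density_def)
  moreover have "(LINT \<delta>:D|lborel. \<phi> \<delta> - unif_dens D) = 0"
    using assms p_int
    by (subst set_integral_diff(2)) (auto simp: is_density_def set_integral_const fmeasurable_def unif_dens_def)
  ultimately show ?thesis by simp
qed

lemma expect_le_bound:
  fixes D :: "'b::euclidean_space set"
  assumes "is_density D \<phi>" "set_integrable lborel D (\<lambda>\<delta>. h \<delta> * \<phi> \<delta>)" "\<And>\<delta>. \<delta> \<in> D \<Longrightarrow> h \<delta> \<le> G"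
  shows "expect D \<phi> h \<le> G"
proof -
  have "expect D \<phi> h \<le> (LINT \<delta>:D|lborel. G * \<phi> \<delta>)"
    unfolding expect_def using assms
    by (intro set_integral_mono) (auto simp: is_density_def intro: mult_right_mono)
  also have "\<dots> = G"
    using assms(1) by (simp add: is_density_def)
  finally show ?thesis .
qed

context
  fixes D :: "'b::euclidean_space set" and g :: "'a \<Rightarrow> 'b \<Rightarrow> real" and x :: 'a and k :: real
  assumes compact: "compact D" and continuous: "continuous_on D (g x)"
    and measure_pos: "0 < measure lborel D" and k_pos: "0 < k"
begin

lemma partition_fun_pos: "0 < partition_fun (g x) D k"
proof -
  have "D \<noteq> {}" using measure_pos by auto
  then obtain b where b: "\<And>y. y \<in> D \<Longrightarrow> g x b \<le> g x y"
    using continuous_attains_inf[OF compact _ continuous] by blast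
  have "measure lborel D * exp (g x b / k) \<le> partition_fun (g x) D k"
    unfolding partition_fun_def using b k_pos compact continuous
    by (intro measure_mult_le_set_integral fmeasurable_compact set_integrable_continuous_on_compact
        continuous_intros) (auto intro: divide_right_mono)
  moreover have "0 < measure lborel D * exp (g x b / k)"
    using measure_pos by simp
  ultimately show ?thesis by linarith
qed

lemma gibbs_pos: "0 < gibbs g D k x \<delta>"
  using partition_fun_pos by (simp add: gibbs_eq)

lemma continuous_on_gibbs: "continuous_on D (gibbs g D k x)"
  unfolding gibbs_eq using continuous k_pos partition_fun_pos
  by (intro continuous_intros) auto

lemma is_density_gibbs: "is_density D (gibbs g D k x)"
proof -
  have "(LINT \<delta>:D|lborel. gibbs g D k x \<delta>) = 1"
    using partition_fun_pos by (simp add: gibbs_eq partition_fun_def)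
  then show ?thesis
    unfolding is_density_def
    using gibbs_pos set_integrable_continuous_on_compact[OF compact continuous_on_gibbs]
    by (auto intro: less_imp_le)
qed

lemma set_integrable_mult_gibbs: "set_integrable lborel D (\<lambda>\<delta>. g x \<delta> * gibbs g D k x \<delta>)"
  using compact continuous continuous_on_gibbs
  by (intro set_integrable_continuous_on_compact continuous_intros)

lemma set_integrable_gibbs_KL:
  "set_integrable lborel D (\<lambda>\<delta>. gibbs g D k x \<delta> * ln (gibbs g D k x \<delta> / unif_dens D))"
  using compact continuous_on_gibbs less_imp_neq[OF gibbs_pos, THEN not_sym] measure_pos
  by (intro set_integrable_continuous_on_compact continuous_intros) (auto simp: unif_dens_def)

lemma expect_minus_KL_gibbs:
  "expect D (gibbs g D k x) (g x) - k * KL_unif D (gibbs g D k x)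
     = k * ln (partition_fun (g x) D k / measure lborel D)"
proof -
  define \<phi> where "\<phi> = gibbs g D k x"
  define c where "c = ln (partition_fun (g x) D k / measure lborel D)"
  have ln_ratio: "ln (\<phi> \<delta> / unif_dens D) = g x \<delta> / k - c" for \<delta>
    using partition_fun_pos measure_pos
    by (simp add: \<phi>_def c_def gibbs_eq unif_dens_def ln_div ln_mult)
  have "KL_unif D \<phi> = (LINT \<delta>:D|lborel. g x \<delta> * \<phi> \<delta> / k - c * \<phi> \<delta>)"
    unfolding KL_unif_def ln_ratio by (simp add: algebra_simps diff_divide_distrib)
  also have "\<dots> = expect D \<phi> (g x) / k - c"
    using set_integrable_mult_gibbs is_density_gibbs
    by (subst set_integral_diff(2)) (auto simp: \<phi>_def expect_def is_density_def)
  finally show ?thesis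
    using k_pos by (simp add: \<phi>_def c_def field_simps)
qed

end

theorem mainTheorem11:
  fixes X :: "'a::euclidean_space set" and \<Delta> :: "'b::euclidean_space set"
    and g :: "'a \<Rightarrow> 'b \<Rightarrow> real" and L \<epsilon> :: real and x :: 'a
  assumes "compact X" and "convex X"
    and "compact \<Delta>" and "convex \<Delta>" and "interior \<Delta> \<noteq> {}"
    and "\<forall>x'\<in>X. L-lipschitz_on \<Delta> (g x')"
    and "\<epsilon> > 0" and "x \<in> X"
  shows "(\<exists>\<phi>. is_density \<Delta> \<phi>
            \<and> set_integrable lborel \<Delta> (\<lambda>\<delta>. g x \<delta> * \<phi> \<delta>)
            \<and> set_integrable lborel \<Delta> (\<lambda>\<delta>. \<phi> \<delta> * ln (\<phi> \<delta> / unif_dens \<Delta>))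
            \<and> expect \<Delta> \<phi> (g x) - kappa L \<Delta> \<epsilon> * KL_unif \<Delta> \<phi> \<ge> Gmax g \<Delta> x - \<epsilon>)
         \<and> Gmax g \<Delta> x \<ge> expect \<Delta> (gibbs g \<Delta> (kappa L \<Delta> \<epsilon>) x) (g x)
         \<and> expect \<Delta> (gibbs g \<Delta> (kappa L \<Delta> \<epsilon>) x) (g x) \<ge> Gmax g \<Delta> x - \<epsilon>"
proof -
  define k where "k = kappa L \<Delta> \<epsilon>"
  define \<phi> where "\<phi> = gibbs g \<Delta> k x"
  have lip: "L-lipschitz_on \<Delta> (g x)" using assms(6,8) by blast
  have cont: "continuous_on \<Delta> (g x)" using lip by (rule lipschitz_on_continuous_on)
  have V: "0 < measure lborel \<Delta>" using assms(3,5) by (rule measure_pos_of_interior_nonempty)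
  have C: "0 \<le> Cconst L \<Delta>" using assms(3,5) lipschitz_on_nonneg[OF lip] by (rule Cconst_nonneg)
  have k: "0 < k" "k \<le> 1" using kappa_pos[OF C assms(7)] kappa_le_1 by (simp_all add: k_def)
  note gibbs = is_density_gibbs set_integrable_mult_gibbs set_integrable_gibbs_KL expect_minus_KL_gibbs
  note gibbs = gibbs[of \<Delta> g x k, OF assms(3) cont V k(1), folded \<phi>_def]
  have "Gmax g \<Delta> x - \<epsilon> \<le> k * ln (partition_fun (g x) \<Delta> k / measure lborel \<Delta>)"
    using log_partition_fun_lower_bound[OF assms(3-5) lip k] kappa_error_le[OF C assms(7)]
    unfolding Gmax_def k_def by linarith
  also have "\<dots> = expect \<Delta> \<phi> (g x) - k * KL_unif \<Delta> \<phi>"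
    using gibbs(4) by simp
  finally have regularized: "Gmax g \<Delta> x - \<epsilon> \<le> expect \<Delta> \<phi> (g x) - k * KL_unif \<Delta> \<phi>" .
  have "0 \<le> k * KL_unif \<Delta> \<phi>"
    using KL_unif_nonneg[OF fmeasurable_compact[OF assms(3)] V gibbs(1,3)] k(1) by simp
  with regularized have "Gmax g \<Delta> x - \<epsilon> \<le> expect \<Delta> \<phi> (g x)" by linarith
  moreover have "expect \<Delta> \<phi> (g x) \<le> Gmax g \<Delta> x"
    unfolding Gmax_def
    using gibbs(1,2)
      bounded_imp_bdd_above[OF compact_imp_bounded[OF compact_continuous_image[OF cont assms(3)]]]
    by (intro expect_le_bound) (auto intro: cSUP_upper)
  ultimately show ?thesis
    using regularized gibbs(1-3) unfolding k_def[symmetric] \<phi>_def[symmetric] by blast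
qed

end
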